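(* Let $\mathcal{H}$ be a complex Hilbert space, let $A\in\mathcal{B}(\mathcal{H})$ be positive, let $S\in\mathcal{B}_A(\mathcal{H})$ and let $\alpha\in\mathbb{C}$ with $\alpha\neq 0$. Then $$d\omega_A^2(S)\le \omega_A^2\left(S^{\sharp_A}S+S\right)+\frac{2}{|\alpha|}\,\omega_A\left(S^{\sharp_A}S^2\right)+\frac{\max\{1,|\alpha-1|\}}{|\alpha|}\left\|\left(S^{\sharp_A}S\right)^2+S^{\sharp_A}S\right\|_A .$$
   Context: $\mathcal{B}(\mathcal{H})$ denotes the bounded linear operators on $\mathcal{H}$. For positive $A$, set $\langle x,z\rangle_A=\langle Ax,z\rangle$ and $\|z\|_A=\|A^{1/2}z\|=\sqrt{\langle z,z\rangle_A}$ (a seminorm). $\mathcal{B}_A(\mathcal{H})$ is the set of $S\in\mathcal{B}(\mathcal{H})$ admitting an $A$-adjoint, i.e. for which there is $R\in\mathcal{B}(\mathcal{H})$ with $AR=S^*A$ (equivalently $\mathcal{R}(S^*A)\subseteq\mathcal{R}(A)$). For $S\in\mathcal{B}_A(\mathcal{H})$, $S^{\sharp_A}=A^{\dagger}S^*A$, where $A^\dagger$ is the Moore–Penrose inverse of $A$; it satisfies $AS^{\sharp_A}=S^*A$ and $\mathcal{R}(S^{\sharp_A})\subseteq\overline{\mathcal{R}(A)}$. For operators $T$ with $\|Tz\|_A\le c\|z\|_A$ for all $z$: $\|T\|_A=\sup\{\|Tz\|_A:\|z\|_A=1\}$, $\omega_A(T)=\sup\{|\langle Tz,z\rangle_A|:\|z\|_A=1\}$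 ($A$-numerical radius), and $d\omega_A(T)=\sup\{(|\langle Tz,z\rangle_A|^2+\|Tz\|_A^4)^{1/2}:\|z\|_A=1\}$ ($A$-Davis–Wielandt radius). *)

theory Defs
  imports "HOL-Analysis.Analysis"
begin

class chilbert = ab_group_add +
  fixes scaleC :: "complex \<Rightarrow> 'a \<Rightarrow> 'a" (infixr "*\<^sub>C" 75)
    and cinner :: "'a \<Rightarrow> 'a \<Rightarrow> complex"
  assumes scaleC_add_right: "a *\<^sub>C (x + y) = a *\<^sub>C x + a *\<^sub>C y"
    and scaleC_add_left: "(a + b) *\<^sub>C x = a *\<^sub>C x + b *\<^sub>C x"
    and scaleC_scaleC: "a *\<^sub>C (b *\<^sub>C x) = (a * b) *\<^sub>C x"
    and scaleC_one: "1 *\<^sub>C x = x"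
    and cinner_add_left: "cinner (x + y) z = cinner x z + cinner y z"
    and cinner_scaleC_left: "cinner (a *\<^sub>C x) z = a * cinner x z"
    and cinner_commute: "cinner y x = cnj (cinner x y)"
    and cinner_nonneg: "0 \<le> Re (cinner x x)"
    and cinner_eq_zero: "cinner x x = 0 \<Longrightarrow> x = 0"
    and cinner_complete:
      "(\<forall>e>0. \<exists>N. \<forall>m\<ge>N. \<forall>n\<ge>N. sqrt (Re (cinner (X m - X n) (X m - X n))) < e)
        \<Longrightarrow> \<exists>L. (\<lambda>n. sqrt (Re (cinner (X n - L) (X n - L)))) \<longlonglongrightarrow> 0"

definition hnorm :: "'a::chilbert \<Rightarrow> real" where
  "hnorm x = sqrt (Re (cinner x x))"

definition bop :: "('a::chilbert \<Rightarrow> 'a) \<Rightarrow> bool" where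
  "bop T \<longleftrightarrow> (\<forall>x y. T (x + y) = T x + T y) \<and> (\<forall>a x. T (a *\<^sub>C x) = a *\<^sub>C T x)
     \<and> (\<exists>c. \<forall>x. hnorm (T x) \<le> c * hnorm x)"

definition adj :: "('a::chilbert \<Rightarrow> 'a) \<Rightarrow> ('a \<Rightarrow> 'a)" where
  "adj T = (THE T'. \<forall>x y. cinner (T x) y = cinner x (T' y))"

definition positive_op :: "('a::chilbert \<Rightarrow> 'a) \<Rightarrow> bool" where
  "positive_op A \<longleftrightarrow> bop A \<and> (\<forall>x. Im (cinner (A x) x) = 0 \<and> 0 \<le> Re (cinner (A x) x))"

text \<open>B_A(H): operators admitting an A-adjoint.\<close>
definition BA :: "('a::chilbert \<Rightarrow> 'a) \<Rightarrow> ('a \<Rightarrow> 'a) set" where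
  "BA A = {S. bop S \<and> (\<exists>R. bop R \<and> A \<circ> R = adj S \<circ> A)}"

definition mp_inv :: "('a::chilbert \<Rightarrow> 'a) \<Rightarrow> 'a \<Rightarrow> 'a" where
  "mp_inv A y = (THE x. (\<forall>w. A w = 0 \<longrightarrow> cinner x w = 0) \<and> A x = y)"

definition sharpA :: "('a::chilbert \<Rightarrow> 'a) \<Rightarrow> ('a \<Rightarrow> 'a) \<Rightarrow> ('a \<Rightarrow> 'a)" where
  "sharpA A S = mp_inv A \<circ> adj S \<circ> A"

definition anorm :: "('a::chilbert \<Rightarrow> 'a) \<Rightarrow> 'a \<Rightarrow> real" where
  "anorm A z = sqrt (Re (cinner (A z) z))"

text \<open>Suprema over the A-unit sphere (0 is inserted so that the supremum of the
  empty set, when A = 0, is 0; the values are all nonnegative, so otherwise this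
  is the plain supremum).\<close>

definition A_opnorm :: "('a::chilbert \<Rightarrow> 'a) \<Rightarrow> ('a \<Rightarrow> 'a) \<Rightarrow> real" where
  "A_opnorm A T = Sup (insert 0 ((\<lambda>z. anorm A (T z)) ` {z. anorm A z = 1}))"

definition A_numrad :: "('a::chilbert \<Rightarrow> 'a) \<Rightarrow> ('a \<Rightarrow> 'a) \<Rightarrow> real" where
  "A_numrad A T = Sup (insert 0 ((\<lambda>z. cmod (cinner (A (T z)) z)) ` {z. anorm A z = 1}))"

definition A_dwrad :: "('a::chilbert \<Rightarrow> 'a) \<Rightarrow> ('a \<Rightarrow> 'a) \<Rightarrow> real" where
  "A_dwrad A T = Sup (insert 0 ((\<lambda>z. sqrt ((cmod (cinner (A (T z)) z))\<^sup>2 + (anorm A (T z)) ^ 4))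
                      ` {z. anorm A z = 1}))"

end

theory Submission
  imports Defs
begin

text \<open>
  Write \<open>\<langle>x, y\<rangle>\<close> for \<open>cinner (A x) y\<close> and \<open>\<parallel>x\<parallel>\<close> for the \<open>A\<close>-seminorm, let \<open>T = S\<^sup>\<sharp>\<^sup>A\<close>, so that
  \<open>\<langle>T u, v\<rangle> = \<langle>u, S v\<rangle>\<close>, and fix \<open>z\<close> with \<open>\<parallel>z\<parallel> = 1\<close>. Put \<open>s = \<langle>S z, z\<rangle>\<close> and
  \<open>b = \<parallel>S z\<parallel>\<^sup>2 = \<langle>T S z, z\<rangle>\<close>. Expanding \<open>|b + s|\<^sup>2\<close> gives
  \<open>|s|\<^sup>2 + b\<^sup>2 \<le> |\<langle>(T S + S) z, z\<rangle>|\<^sup>2 + 2 b |s|\<close>. Now \<open>b |s| = |\<langle>S z, z\<rangle> \<langle>z, T S z\<rangle>|\<close>, and the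
  generalised Buzano inequality bounds it by
  \<open>(max 1 |\<alpha> - 1| \<parallel>S z\<parallel> \<parallel>T S z\<parallel> + |\<langle>T S\<^sup>2 z, z\<rangle>|) / |\<alpha>|\<close>, where
  \<open>2 \<parallel>S z\<parallel> \<parallel>T S z\<parallel> \<le> \<parallel>T S z\<parallel>\<^sup>2 + \<parallel>S z\<parallel>\<^sup>2 = Re \<langle>((T S)\<^sup>2 + T S) z, z\<rangle> \<le> \<parallel>((T S)\<^sup>2 + T S) z\<parallel>\<close>.
  Taking suprema over \<open>z\<close> gives the theorem.

  The suprema are finite because operators in \<open>B\<^sub>A(H)\<close> are \<open>A\<close>-bounded: for an \<open>A\<close>-adjoint \<open>R\<close>
  of \<open>S\<close> the operator \<open>R S\<close> is \<open>A\<close>-selfadjoint, and a spectral-radius argument bounds it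
  without a square root of \<open>A\<close>. Since \<open>adj\<close> and \<open>mp_inv\<close> are definite descriptions, the identity
  \<open>\<langle>T u, v\<rangle> = \<langle>u, S v\<rangle>\<close> needs the existence of Hilbert adjoints (Riesz representation) and of
  orthogonal projections onto closed subspaces (for the kernel of \<open>A\<close>).
\<close>

section \<open>Semi-inner products\<close>

lemma scaleC_zero_left [simp]: "(0::complex) *\<^sub>C (x::'a::chilbert) = 0"
proof -
  have "0 *\<^sub>C x = 0 *\<^sub>C x + 0 *\<^sub>C x" using scaleC_add_left[of 0 0 x] by simp
  then show ?thesis by simp
qed

lemma scaleC_zero_right [simp]: "a *\<^sub>C (0::'a::chilbert) = 0"
proof -
  have "a *\<^sub>C (0::'a) = a *\<^sub>C 0 + a *\<^sub>C 0" using scaleC_add_right[of a 0 0] by simp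
  then show ?thesis by simp
qed

lemma scaleC_minus_left: "(- a) *\<^sub>C (x::'a::chilbert) = - (a *\<^sub>C x)"
  using scaleC_add_left[of a "-a" x] by (simp add: eq_neg_iff_add_eq_0 add.commute)

lemma scaleC_minus_right: "a *\<^sub>C (- x::'a::chilbert) = - (a *\<^sub>C x)"
  using scaleC_add_right[of a x "-x"] by (simp add: eq_neg_iff_add_eq_0 add.commute)

lemma scaleC_diff_right: "a *\<^sub>C (x - y::'a::chilbert) = a *\<^sub>C x - a *\<^sub>C y"
  using scaleC_add_right[of a x "-y"] scaleC_minus_right[of a y] by simp

lemma scaleC_two: "(2::complex) *\<^sub>C (x::'a::chilbert) = x + x"
  using scaleC_add_left[of 1 1 x] by (simp add: scaleC_one)

lemma cnj_mult_self: "cnj k * k = complex_of_real ((cmod k)\<^sup>2)"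
  using complex_norm_square[of k] by (simp add: mult.commute)

lemma Re_cnj_mult_mult_self: "Re (cnj (a * z) * z) = Re a * (cmod z)\<^sup>2"
  by (simp add: mult.assoc cnj_mult_self)

lemma cmod_sq_add_sq_le:
  assumes "0 \<le> b"
  shows "(cmod s)\<^sup>2 + b\<^sup>2 \<le> (cmod (complex_of_real b + s))\<^sup>2 + 2 * (b * cmod s)"
proof -
  have "- (b * Re s) \<le> b * cmod s"
    using mult_left_mono[OF complex_Re_le_cmod[of "- s"] assms] by simp
  moreover have "(cmod (complex_of_real b + s))\<^sup>2 = b\<^sup>2 + 2 * (b * Re s) + (cmod s)\<^sup>2"
    unfolding cmod_power2 by (simp add: power2_eq_square algebra_simps)
  ultimately show ?thesis by linarith
qed

locale semi_inner =
  fixes B :: "'a::chilbert \<Rightarrow> 'a \<Rightarrow> complex"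
  assumes add_left: "B (x + y) z = B x z + B y z"
    and scale_left: "B (a *\<^sub>C x) z = a * B x z"
    and hermitian: "B y x = cnj (B x y)"
    and nonneg: "0 \<le> Re (B x x)"
begin

lemma zero_left [simp]: "B 0 z = 0"
  using add_left[of 0 0 z] by simp

lemma zero_right [simp]: "B z 0 = 0"
  using hermitian[of 0 z] by simp

lemma minus_left: "B (- x) z = - B x z"
  using add_left[of x "-x" z] by (simp add: eq_neg_iff_add_eq_0 add.commute)

lemma diff_left: "B (x - y) z = B x z - B y z"
  using add_left[of x "-y" z] minus_left[of y z] by simp

lemma add_right: "B z (x + y) = B z x + B z y"
  using hermitian[of z "x + y"] hermitian[of z x] hermitian[of z y] add_left[of x y z] by simp

lemma scale_right: "B z (a *\<^sub>C x) = cnj a * B z x"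
  using hermitian[of z "a *\<^sub>C x"] hermitian[of z x] scale_left[of a x z] by simp

lemma minus_right: "B z (- x) = - B z x"
  using hermitian[of z "-x"] hermitian[of z x] minus_left[of x z] by simp

lemma diff_right: "B z (x - y) = B z x - B z y"
  using add_right[of z x "-y"] minus_right[of z y] by simp

lemma self_real: "B x x = complex_of_real (Re (B x x))"
  using hermitian[of x x] by (simp add: complex_eq_iff)

lemma Re_diff_scale_self:
  "Re (B (x - k *\<^sub>C y) (x - k *\<^sub>C y))
     = Re (B x x) - 2 * Re (cnj k * B x y) + (cmod k)\<^sup>2 * Re (B y y)"
proof -
  have "B (x - k *\<^sub>C y) (x - k *\<^sub>C y) = B x x - k * B y x - cnj k * (B x y - k * B y y)"
    by (simp only: diff_left diff_right scale_left scale_right)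
  moreover have "Re (k * B y x) = Re (cnj k * B x y)"
    unfolding hermitian[of x y] by (metis complex_cnj_cnj complex_cnj_mult cnj.simps(1))
  moreover have "Re (cnj k * (k * B y y)) = (cmod k)\<^sup>2 * Re (B y y)"
    unfolding mult.assoc[symmetric] cnj_mult_self by simp
  ultimately show ?thesis by (simp add: right_diff_distrib)
qed

lemma Re_scale_self: "Re (B (a *\<^sub>C x) (a *\<^sub>C x)) = (cmod a)\<^sup>2 * Re (B x x)"
  using Re_diff_scale_self[of 0 "-a" x] by (simp add: scaleC_minus_left)

lemma parallelogram:
  "Re (B (x + y) (x + y)) + Re (B (x - y) (x - y)) = 2 * Re (B x x) + 2 * Re (B y y)"
  by (simp add: add_left add_right diff_left diff_right)

lemma cauchy_schwarz_sq: "(cmod (B x y))\<^sup>2 \<le> Re (B x x) * Re (B y y)"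
proof (cases "Re (B y y) = 0")
  case True
  have "B x y = 0"
  proof (rule ccontr)
    assume nz: "B x y \<noteq> 0"
    define t :: real where "t = (Re (B x x) + 1) / (2 * (cmod (B x y))\<^sup>2)"
    have "Re (cnj (complex_of_real t * B x y) * B x y) = t * (cmod (B x y))\<^sup>2"
      by (simp only: Re_cnj_mult_mult_self Re_complex_of_real)
    then have "0 \<le> Re (B x x) - 2 * t * (cmod (B x y))\<^sup>2"
      using nonneg[of "x - (t * B x y) *\<^sub>C y"] unfolding Re_diff_scale_self True by simp
    also have "2 * t * (cmod (B x y))\<^sup>2 = Re (B x x) + 1"
      unfolding t_def using nz by (simp add: field_simps)
    finally show False by simp
  qed
  then show ?thesis using nonneg[of x] nonneg[of y] by simp
next
  case False
  then have r: "Re (B y y) > 0" using nonneg[of y] by simp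
  define k where "k = complex_of_real (1 / Re (B y y)) * B x y"
  have kc: "Re (cnj k * B x y) = (cmod (B x y))\<^sup>2 / Re (B y y)"
    unfolding k_def Re_cnj_mult_mult_self Re_complex_of_real by simp
  have kk: "(cmod k)\<^sup>2 = (cmod (B x y))\<^sup>2 / (Re (B y y))\<^sup>2"
    unfolding k_def using r by (simp add: norm_divide power_divide)
  have "0 \<le> Re (B (x - k *\<^sub>C y) (x - k *\<^sub>C y))" by (rule nonneg)
  also have "\<dots> = Re (B x x) - (cmod (B x y))\<^sup>2 / Re (B y y)"
    unfolding Re_diff_scale_self kc kk using r by (simp add: power2_eq_square)
  finally show ?thesis using r by (simp add: field_simps)
qed

definition snorm :: "'a \<Rightarrow> real" where
  "snorm x = sqrt (Re (B x x))"

lemma snorm_nonneg: "0 \<le> snorm x"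
  unfolding snorm_def using nonneg[of x] by simp

lemma snorm_sq: "(snorm x)\<^sup>2 = Re (B x x)"
  unfolding snorm_def using nonneg[of x] by simp

lemma cauchy_schwarz: "cmod (B x y) \<le> snorm x * snorm y"
proof -
  have "(cmod (B x y))\<^sup>2 \<le> (snorm x * snorm y)\<^sup>2"
    using cauchy_schwarz_sq[of x y] by (simp add: power_mult_distrib snorm_sq)
  then show ?thesis using snorm_nonneg[of x] snorm_nonneg[of y]
    by (meson mult_nonneg_nonneg power2_le_imp_le)
qed

lemma Re_le_snorm_mult: "Re (B x y) \<le> snorm x * snorm y"
  using complex_Re_le_cmod[of "B x y"] cauchy_schwarz[of x y] by linarith

lemma snorm_triangle: "snorm (x + y) \<le> snorm x + snorm y"
proof -
  have "(snorm (x + y))\<^sup>2 = (snorm x)\<^sup>2 + 2 * Re (B x y) + (snorm y)\<^sup>2"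
    using hermitian[of x y] by (simp add: snorm_sq add_left add_right)
  also have "\<dots> \<le> (snorm x + snorm y)\<^sup>2"
    using Re_le_snorm_mult[of x y] by (simp add: power2_eq_square algebra_simps)
  finally show ?thesis using snorm_nonneg[of x] snorm_nonneg[of y]
    by (meson add_nonneg_nonneg power2_le_imp_le)
qed

lemma snorm_minus_commute: "snorm (x - y) = snorm (y - x)"
  using minus_diff_eq[of x y] unfolding snorm_def by (metis minus_left minus_right minus_minus)

lemma snorm_diff_scaled_le:
  assumes e: "snorm e = 1"
  shows "snorm (a - (\<alpha> * B a e) *\<^sub>C e) \<le> max 1 (cmod (\<alpha> - 1)) * snorm a"
proof -
  define k where "k = \<alpha> * B a e"
  define M where "M = max 1 (cmod (\<alpha> - 1))"
  have Ma: "cmod (\<alpha> - 1) \<le> M" and M1: "1 \<le> M" unfolding M_def by auto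
  have ee: "Re (B e e) = 1" using e snorm_sq[of e] by simp
  have "Re (cnj k * B a e) = Re \<alpha> * (cmod (B a e))\<^sup>2"
    unfolding k_def by (rule Re_cnj_mult_mult_self)
  moreover have "(cmod k)\<^sup>2 = (cmod \<alpha>)\<^sup>2 * (cmod (B a e))\<^sup>2"
    unfolding k_def by (simp add: norm_mult power_mult_distrib)
  ultimately have expand: "(snorm (a - k *\<^sub>C e))\<^sup>2
      = (snorm a)\<^sup>2 + (cmod (B a e))\<^sup>2 * ((cmod \<alpha>)\<^sup>2 - 2 * Re \<alpha>)"
    unfolding snorm_sq Re_diff_scale_self ee by (simp add: algebra_simps)
  have am1: "(cmod (\<alpha> - 1))\<^sup>2 = (cmod \<alpha>)\<^sup>2 - 2 * Re \<alpha> + 1"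
    unfolding cmod_power2 by (simp add: power2_eq_square algebra_simps)
  have ae: "(cmod (B a e))\<^sup>2 \<le> (snorm a)\<^sup>2"
    using cauchy_schwarz_sq[of a e] ee unfolding snorm_sq by simp
  have "(snorm (a - k *\<^sub>C e))\<^sup>2 \<le> (M * snorm a)\<^sup>2"
  proof (cases "(cmod \<alpha>)\<^sup>2 - 2 * Re \<alpha> \<ge> 0")
    case True
    then have "(snorm (a - k *\<^sub>C e))\<^sup>2 \<le> (snorm a)\<^sup>2 + (snorm a)\<^sup>2 * ((cmod \<alpha>)\<^sup>2 - 2 * Re \<alpha>)"
      unfolding expand using ae by (simp add: mult_right_mono)
    also have "\<dots> = (cmod (\<alpha> - 1) * snorm a)\<^sup>2"
      unfolding power_mult_distrib am1 by (simp add: algebra_simps)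
    also have "\<dots> \<le> (M * snorm a)\<^sup>2"
      using Ma snorm_nonneg[of a] by (intro power_mono mult_right_mono) auto
    finally show ?thesis .
  next
    case False
    then have "(snorm (a - k *\<^sub>C e))\<^sup>2 \<le> (1 * snorm a)\<^sup>2"
      unfolding expand by (simp add: mult_nonneg_nonpos)
    also have "\<dots> \<le> (M * snorm a)\<^sup>2"
      using M1 snorm_nonneg[of a] by (intro power_mono mult_right_mono) auto
    finally show ?thesis .
  qed
  then show ?thesis unfolding k_def M_def[symmetric]
    using M1 snorm_nonneg[of a] by (meson mult_nonneg_nonneg order_trans zero_le_one power2_le_imp_le)
qed

text \<open>For \<open>\<alpha> = 2\<close> this is Buzano's inequality. Proof: Cauchy--Schwarz for
  \<open>a - (\<alpha> * B a e) *\<^sub>C e\<close> and \<open>c\<close>.\<close>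

lemma generalized_buzano:
  assumes e: "snorm e = 1" and \<alpha>: "\<alpha> \<noteq> 0"
  shows "cmod (B a e * B e c)
    \<le> (max 1 (cmod (\<alpha> - 1)) * snorm a * snorm c + cmod (B a c)) / cmod \<alpha>"
proof -
  define k where "k = \<alpha> * B a e"
  define M where "M = max 1 (cmod (\<alpha> - 1))"
  have "cmod (B (a - k *\<^sub>C e) c) \<le> M * snorm a * snorm c"
    using cauchy_schwarz[of "a - k *\<^sub>C e" c] snorm_diff_scaled_le[OF e, of a \<alpha>] snorm_nonneg[of c]
    unfolding k_def M_def by (meson mult_right_mono order_trans)
  moreover have "k * B e c = B a c - B (a - k *\<^sub>C e) c"
    by (simp add: diff_left scale_left)
  ultimately have "cmod (k * B e c) \<le> cmod (B a c) + M * snorm a * snorm c"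
    by (metis norm_triangle_ineq4 add_left_mono order_trans)
  then have "cmod \<alpha> * cmod (B a e * B e c) \<le> M * snorm a * snorm c + cmod (B a c)"
    unfolding k_def by (simp add: norm_mult mult.assoc)
  then show ?thesis unfolding M_def[symmetric] using \<alpha>
    by (simp add: field_simps)
qed

lemma apollonius:
  "(snorm (x - y))\<^sup>2 = 2 * (snorm (u - x))\<^sup>2 + 2 * (snorm (u - y))\<^sup>2
     - 4 * (snorm (u - (1/2) *\<^sub>C (x + y)))\<^sup>2"
proof -
  have "(u - x) + (u - y) = (2::complex) *\<^sub>C (u - (1/2) *\<^sub>C (x + y))"
    by (simp add: scaleC_diff_right scaleC_scaleC scaleC_one scaleC_two algebra_simps)
  then have "Re (B ((u - x) + (u - y)) ((u - x) + (u - y))) = 4 * (snorm (u - (1/2) *\<^sub>C (x + y)))\<^sup>2"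
    by (simp add: Re_scale_self snorm_sq)
  moreover have "(u - x) - (u - y) = y - x" by simp
  ultimately show ?thesis
    using parallelogram[of "u - x" "u - y"] snorm_minus_commute[of x y] unfolding snorm_sq[symmetric]
    by simp
qed

lemma snorm_sq_le_adjoint:
  assumes adj: "\<And>u v. B (R u) v = B u (S v)"
  shows "(snorm (S x))\<^sup>2 \<le> snorm (R (S x)) * snorm x"
proof -
  have "(snorm (S x))\<^sup>2 = Re (B (R (S x)) x)"
    unfolding snorm_sq adj ..
  then show ?thesis using Re_le_snorm_mult by simp
qed

lemma selfadjoint_funpow:
  assumes sym: "\<And>u v. B (T u) v = B u (T v)"
  shows "B ((T ^^ k) u) v = B u ((T ^^ k) v)"
  by (induction k arbitrary: u v) (simp_all add: sym funpow_swap1)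

lemma snorm_selfadjoint_pow_two_pow:
  assumes sym: "\<And>u v. B (T u) v = B u (T v)"
  shows "snorm (T x) ^ 2 ^ n * snorm x \<le> snorm ((T ^^ 2 ^ n) x) * snorm x ^ 2 ^ n"
proof (induction n)
  case (Suc n)
  have pw: "\<And>y::real. y ^ 2 ^ n * y ^ 2 ^ n = y ^ (2 * 2 ^ n)" by (simp add: mult_2 power_add)
  have square: "(T ^^ 2 ^ n) ((T ^^ 2 ^ n) x) = (T ^^ 2 ^ Suc n) x"
    by (simp add: funpow_add mult_2)
  have "(snorm (T x) ^ 2 ^ n * snorm x)\<^sup>2 \<le> (snorm ((T ^^ 2 ^ n) x) * snorm x ^ 2 ^ n)\<^sup>2"
    using Suc.IH snorm_nonneg by (intro power_mono) auto
  also have "\<dots> = (snorm ((T ^^ 2 ^ n) x))\<^sup>2 * snorm x ^ 2 ^ Suc n"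
    by (simp add: power_mult_distrib power_mult[symmetric] mult.commute)
  also have "\<dots> \<le> (snorm ((T ^^ 2 ^ Suc n) x) * snorm x) * snorm x ^ 2 ^ Suc n"
    using snorm_sq_le_adjoint[OF selfadjoint_funpow[OF sym]] snorm_nonneg unfolding square[symmetric]
    by (intro mult_right_mono) auto
  finally have "snorm (T x) ^ 2 ^ Suc n * snorm x * snorm x
      \<le> snorm ((T ^^ 2 ^ Suc n) x) * snorm x ^ 2 ^ Suc n * snorm x"
    by (simp add: power_mult_distrib power_mult[symmetric] power2_eq_square algebra_simps pw)
  then show ?case
    using snorm_nonneg[of x] by (cases "snorm x = 0") (simp_all add: zero_power)
qed simp

text \<open>A spectral-radius argument, standing in for the square root of the form.\<close>

lemma snorm_le_of_selfadjoint_powers: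
  assumes sym: "\<And>u v. B (T u) v = B u (T v)"
    and bound: "\<And>k. snorm ((T ^^ k) x) \<le> K * c ^ k" and c: "0 < c"
  shows "snorm (T x) \<le> c * snorm x"
proof (cases "snorm x = 0")
  case True
  then show ?thesis using snorm_sq_le_adjoint[OF sym, of x] by simp
next
  case False
  then have x: "0 < snorm x" using snorm_nonneg[of x] by simp
  define q where "q = snorm (T x) / (c * snorm x)"
  have q_pow: "q ^ 2 ^ n \<le> K / snorm x" for n
  proof -
    have "snorm (T x) ^ 2 ^ n * snorm x \<le> K * c ^ 2 ^ n * snorm x ^ 2 ^ n"
      using snorm_selfadjoint_pow_two_pow[OF sym, of x n] bound[of "2 ^ n"] snorm_nonneg x
      by (meson mult_right_mono order_trans zero_le_power)
    then show ?thesis unfolding q_def using c x by (simp add: power_divide power_mult_distrib field_simps)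
  qed
  have "q \<le> 1"
  proof (rule ccontr)
    assume "\<not> q \<le> 1"
    then obtain n where n: "K / snorm x < q ^ n" and q1: "1 < q" using real_arch_pow by fastforce
    have "q ^ n \<le> q ^ 2 ^ n" using q1 by (intro power_increasing) (auto intro: less_imp_le less_exp)
    then show False using n q_pow[of n] by simp
  qed
  then show ?thesis unfolding q_def using c x by (simp add: field_simps)
qed

lemma snorm_adjoint_le:
  assumes adj: "\<And>u v. B (T u) v = B u (S v)"
    and bound: "\<And>x. snorm (S x) \<le> C * snorm x" and C: "0 \<le> C"
  shows "snorm (T u) \<le> C * snorm u"
proof -
  have "(snorm (T u))\<^sup>2 = Re (B u (S (T u)))"
    unfolding snorm_sq adj ..
  also have "\<dots> \<le> snorm u * snorm (S (T u))" by (rule Re_le_snorm_mult)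
  also have "\<dots> \<le> snorm u * (C * snorm (T u))"
    using bound snorm_nonneg by (rule mult_left_mono)
  finally have "snorm (T u) * snorm (T u) \<le> (C * snorm u) * snorm (T u)"
    by (simp add: power2_eq_square algebra_simps)
  then show ?thesis
    using snorm_nonneg[of "T u"] snorm_nonneg[of u] C
    by (cases "snorm (T u) = 0") auto
qed

lemma adjoint_comp_swap:
  assumes adj: "\<And>u v. B (T u) v = B u (S v)"
  shows "B (T (S w)) z = cnj (B (T (S z)) w)"
  unfolding adj by (rule hermitian)

lemma two_snorm_mult_le_adjoint:
  assumes adj: "\<And>u v. B (T u) v = B u (S v)" and z: "snorm z = 1"
  shows "2 * (snorm (S z) * snorm (T (S z))) \<le> snorm (T (S (T (S z))) + T (S z))"
proof -
  have "B (T (S (T (S z)))) z = cnj (B (T (S z)) (T (S z)))"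
    by (rule adjoint_comp_swap[OF adj])
  then have "(snorm (T (S z)))\<^sup>2 + (snorm (S z))\<^sup>2 = Re (B (T (S (T (S z))) + T (S z)) z)"
    unfolding add_left adj snorm_sq by simp
  also have "\<dots> \<le> snorm (T (S (T (S z))) + T (S z))"
    using Re_le_snorm_mult[of _ z] z by simp
  finally show ?thesis using sum_squares_bound[of "snorm (S z)" "snorm (T (S z))"]
    by (simp add: algebra_simps)
qed

lemma davis_wielandt_unit_bound:
  assumes adj: "\<And>u v. B (T u) v = B u (S v)" and z: "snorm z = 1" and \<alpha>: "\<alpha> \<noteq> 0"
  shows "(cmod (B (S z) z))\<^sup>2 + (snorm (S z)) ^ 4
    \<le> (cmod (B (T (S z) + S z) z))\<^sup>2
       + 2 / cmod \<alpha> * cmod (B (T (S (S z))) z)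
       + max 1 (cmod (\<alpha> - 1)) / cmod \<alpha> * snorm (T (S (T (S z))) + T (S z))"
proof -
  define b where "b = (snorm (S z))\<^sup>2"
  define M where "M = max 1 (cmod (\<alpha> - 1))"
  have b: "0 \<le> b" unfolding b_def by simp
  have TSz: "B (T (S z)) z = complex_of_real b"
    unfolding adj b_def snorm_sq by (rule self_real)
  have expand: "(cmod (B (S z) z))\<^sup>2 + (snorm (S z)) ^ 4
      \<le> (cmod (B (T (S z) + S z) z))\<^sup>2 + 2 * (b * cmod (B (S z) z))"
    using cmod_sq_add_sq_le[OF b, of "B (S z) z"]
    unfolding add_left TSz by (simp add: b_def flip: power_mult)
  have buzano: "b * cmod (B (S z) z)
      \<le> (M * snorm (S z) * snorm (T (S z)) + cmod (B (T (S (S z))) z)) / cmod \<alpha>"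
  proof -
    have "B z (T (S z)) = complex_of_real b"
      using hermitian[of z "T (S z)"] TSz by simp
    moreover have "B (S z) (T (S z)) = B (T (S (S z))) z"
      using hermitian adjoint_comp_swap[OF adj] by metis
    ultimately show ?thesis
      using generalized_buzano[OF z \<alpha>, of "S z" "T (S z)"] b
      unfolding M_def by (simp add: norm_mult mult.commute)
  qed
  have am_gm: "2 * (snorm (S z) * snorm (T (S z))) \<le> snorm (T (S (T (S z))) + T (S z))"
    by (rule two_snorm_mult_le_adjoint[OF adj z])
  have "2 * (b * cmod (B (S z) z))
      \<le> (M * (2 * (snorm (S z) * snorm (T (S z)))) + 2 * cmod (B (T (S (S z))) z)) / cmod \<alpha>"
    using buzano \<alpha> by (simp add: field_simps)
  also have "\<dots> \<le> (M * snorm (T (S (T (S z))) + T (S z)) + 2 * cmod (B (T (S (S z))) z)) / cmod \<alpha>"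
    using am_gm by (intro divide_right_mono add_right_mono mult_left_mono) (auto simp: M_def)
  finally show ?thesis using expand unfolding M_def by (simp add: add_divide_distrib)
qed

end

section \<open>Projections, the Riesz representation and adjoints\<close>

interpretation cin: semi_inner cinner
  rewrites "semi_inner.snorm cinner = hnorm"
proof -
  show "semi_inner cinner"
    by unfold_locales (simp_all add: cinner_add_left cinner_scaleC_left cinner_nonneg flip: cinner_commute)
  then show "semi_inner.snorm cinner = hnorm"
    using semi_inner.snorm_def unfolding hnorm_def by fastforce
qed

lemma hnorm_eq_zero [simp]: "hnorm x = 0 \<longleftrightarrow> x = 0"
proof
  assume "hnorm x = 0"
  then have "cinner x x = 0" using cin.snorm_sq[of x] cin.self_real[of x] by simp
  then show "x = 0" by (rule cinner_eq_zero)
qed (simp add: hnorm_def)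

lemma bop_add: "bop T \<Longrightarrow> T (x + y) = T x + T y"
  unfolding bop_def by blast

lemma bop_scale: "bop T \<Longrightarrow> T (a *\<^sub>C x) = a *\<^sub>C T x"
  unfolding bop_def by blast

lemma bop_zero: "bop T \<Longrightarrow> T 0 = 0"
  using bop_add[of T 0 0] by simp

lemma bop_diff: "bop T \<Longrightarrow> T (x - y) = T x - T y"
  using bop_add[of T "x - y" y] by (simp add: eq_diff_eq)

lemma bop_bound: "bop T \<Longrightarrow> \<exists>c>0. \<forall>x. hnorm (T x) \<le> c * hnorm x"
proof -
  assume "bop T"
  then obtain c where "\<forall>x. hnorm (T x) \<le> c * hnorm x" unfolding bop_def by blast
  then have "\<forall>x. hnorm (T x) \<le> max c 1 * hnorm x"
    by (meson cin.snorm_nonneg max.cobounded1 mult_right_mono order_trans)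
  then show ?thesis by (intro exI[of _ "max c 1"]) simp
qed

lemma hnorm_funpow_le:
  fixes T :: "'a::chilbert \<Rightarrow> 'a"
  assumes "\<And>x. hnorm (T x) \<le> c * hnorm x" and "0 \<le> c"
  shows "hnorm ((T ^^ k) x) \<le> c ^ k * hnorm x"
proof (induction k)
  case (Suc k)
  have "hnorm ((T ^^ Suc k) x) \<le> c * hnorm ((T ^^ k) x)" using assms(1)[of "(T ^^ k) x"] by simp
  also have "\<dots> \<le> c * (c ^ k * hnorm x)" using Suc.IH assms(2) by (rule mult_left_mono)
  finally show ?case by simp
qed simp

definition csubspace :: "'a::chilbert set \<Rightarrow> bool" where
  "csubspace M \<longleftrightarrow> 0 \<in> M \<and> (\<forall>x\<in>M. \<forall>y\<in>M. x + y \<in> M) \<and> (\<forall>a. \<forall>x\<in>M. a *\<^sub>C x \<in> M)"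

definition closed_csubspace :: "'a::chilbert set \<Rightarrow> bool" where
  "closed_csubspace M \<longleftrightarrow> (\<forall>X L. (\<forall>n. X n \<in> M) \<longrightarrow> (\<lambda>n. hnorm (X n - L)) \<longlonglongrightarrow> 0 \<longrightarrow> L \<in> M)"

lemma closed_csubspace_zero_set:
  fixes g :: "'a::chilbert \<Rightarrow> 'b::ab_group_add"
  assumes diff: "\<And>x y. g (x - y) = g x - g y"
    and bound: "\<And>x. s (g x) \<le> K * hnorm x" and definite: "\<And>v. s v \<le> 0 \<Longrightarrow> v = 0"
  shows "closed_csubspace {x. g x = 0}"
  unfolding closed_csubspace_def
proof (intro allI impI)
  fix X L assume X: "\<forall>n. X n \<in> {x. g x = 0}" and lim: "(\<lambda>n. hnorm (X n - L)) \<longlonglongrightarrow> 0"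
  have "s (g L) \<le> K * hnorm (X n - L)" for n
    using X bound[of "L - X n"] diff[of L "X n"] cin.snorm_minus_commute[of L "X n"] by simp
  moreover have "(\<lambda>n. K * hnorm (X n - L)) \<longlonglongrightarrow> K * 0"
    by (intro tendsto_intros lim)
  ultimately have "s (g L) \<le> 0"
    by (intro LIMSEQ_le_const[where X = "\<lambda>n. K * hnorm (X n - L)"]) auto
  then show "L \<in> {x. g x = 0}" using definite by simp
qed

lemma hnorm_Cauchy_limit:
  assumes bound: "\<And>j k. (hnorm (X j - X k))\<^sup>2 \<le> \<delta> j + \<delta> k" and \<delta>: "\<delta> \<longlonglongrightarrow> 0"
  obtains L where "(\<lambda>n. hnorm (X n - L)) \<longlonglongrightarrow> 0"
proof -
  have "\<exists>N. \<forall>m\<ge>N. \<forall>n\<ge>N. hnorm (X m - X n) < e" if e: "e > 0" for e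
  proof -
    obtain N where N: "\<And>n. n \<ge> N \<Longrightarrow> \<delta> n < e\<^sup>2 / 2"
      using order_tendstoD(2)[OF \<delta>, of "e\<^sup>2 / 2"] e unfolding eventually_sequentially by auto
    have "hnorm (X m - X n) < e" if "m \<ge> N" "n \<ge> N" for m n
    proof -
      have "(hnorm (X m - X n))\<^sup>2 < e\<^sup>2"
        using bound[of m n] N[OF that(1)] N[OF that(2)] by linarith
      then show ?thesis using e by (simp add: power_less_imp_less_base)
    qed
    then show ?thesis by blast
  qed
  then show ?thesis using cinner_complete[of X] that unfolding hnorm_def by blast
qed

lemma nearest_point_exists:
  assumes M: "csubspace M" and closed: "closed_csubspace M"
  shows "\<exists>p\<in>M. \<forall>m\<in>M. hnorm (u - p) \<le> hnorm (u - m)"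
proof -
  define f where "f m = (hnorm (u - m))\<^sup>2" for m
  define d where "d = Inf (f ` M)"
  have M0: "0 \<in> M" and Mmid: "\<And>x y. x \<in> M \<Longrightarrow> y \<in> M \<Longrightarrow> (1/2) *\<^sub>C (x + y) \<in> M"
    using M unfolding csubspace_def by auto
  have bdd: "bdd_below (f ` M)" by (rule bdd_belowI[of _ 0]) (auto simp: f_def)
  have d_le: "\<And>m. m \<in> M \<Longrightarrow> d \<le> f m" unfolding d_def using bdd by (auto intro: cInf_lower)
  have "\<forall>n. \<exists>m\<in>M. f m < d + inverse (real (Suc n))"
    using cInf_lessD[of "f ` M" "d + inverse (real (Suc n))" for n] M0 unfolding d_def by fastforce
  then obtain X where XM: "\<And>n. X n \<in> M" and Xf: "\<And>n. f (X n) < d + inverse (real (Suc n))"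
    by metis
  have "(hnorm (X j - X k))\<^sup>2 \<le> 2 * inverse (real (Suc j)) + 2 * inverse (real (Suc k))" for j k
    using cin.apollonius[of "X j" "X k" u] Xf[of j] Xf[of k] d_le[OF Mmid[OF XM[of j] XM[of k]]]
    unfolding f_def by linarith
  moreover have "(\<lambda>n. 2 * inverse (real (Suc n))) \<longlonglongrightarrow> 0"
    using tendsto_mult_right_zero[OF LIMSEQ_inverse_real_of_nat, of 2] by (simp add: mult.commute)
  ultimately obtain L where lim: "(\<lambda>n. hnorm (X n - L)) \<longlonglongrightarrow> 0"
    by (rule hnorm_Cauchy_limit)
  have LM: "L \<in> M" using closed XM lim unfolding closed_csubspace_def by blast
  have "hnorm (u - L) \<le> sqrt (d + inverse (real (Suc n))) + hnorm (X n - L)" for n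
  proof -
    have "hnorm (u - L) \<le> hnorm (u - X n) + hnorm (X n - L)"
      using cin.snorm_triangle[of "u - X n" "X n - L"] by simp
    moreover have "hnorm (u - X n) \<le> sqrt (d + inverse (real (Suc n)))"
      using Xf[of n] unfolding f_def by (simp add: real_le_rsqrt)
    ultimately show ?thesis by simp
  qed
  moreover have "(\<lambda>n. sqrt (d + inverse (real (Suc n))) + hnorm (X n - L)) \<longlonglongrightarrow> sqrt (d + 0) + 0"
    by (intro tendsto_intros LIMSEQ_inverse_real_of_nat lim)
  ultimately have "hnorm (u - L) \<le> sqrt d"
    by (intro LIMSEQ_le_const[where X = "\<lambda>n. sqrt (d + inverse (real (Suc n))) + hnorm (X n - L)"]) auto
  then have "\<forall>m\<in>M. hnorm (u - L) \<le> hnorm (u - m)"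
    using d_le unfolding f_def by (meson cin.snorm_nonneg order_trans real_le_lsqrt real_sqrt_le_mono)
  then show ?thesis using LM by blast
qed
lemma nearest_point_orthogonal:
  assumes M: "csubspace M" and p: "p \<in> M" and nearest: "\<forall>m\<in>M. hnorm (u - p) \<le> hnorm (u - m)"
    and m: "m \<in> M"
  shows "cinner (u - p) m = 0"
proof -
  define c where "c = cinner (u - p) m"
  define r where "r = Re (cinner m m)"
  define t where "t = 1 / (r + 1)"
  have r: "0 \<le> r" unfolding r_def by (rule cinner_nonneg)
  have t: "0 < t" "t * r < 1" unfolding t_def using r by (simp_all add: field_simps)
  have "p + (t * c) *\<^sub>C m \<in> M" using M p m unfolding csubspace_def by blast
  then have "hnorm (u - p) \<le> hnorm ((u - p) - (t * c) *\<^sub>C m)"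
    using nearest by (simp add: algebra_simps)
  then have "(hnorm (u - p))\<^sup>2 \<le> (hnorm ((u - p) - (t * c) *\<^sub>C m))\<^sup>2"
    using cin.snorm_nonneg by (intro power_mono)
  also have "\<dots> = (hnorm (u - p))\<^sup>2 - 2 * t * (cmod c)\<^sup>2 + t\<^sup>2 * (cmod c)\<^sup>2 * r"
    unfolding cin.snorm_sq cin.Re_diff_scale_self c_def[symmetric] r_def[symmetric]
      Re_cnj_mult_mult_self
    using t by (simp add: norm_mult power_mult_distrib)
  finally have "t * (cmod c)\<^sup>2 * (2 - t * r) \<le> 0"
    by (simp add: power2_eq_square algebra_simps)
  then have "(cmod c)\<^sup>2 \<le> 0"
    using t by (simp add: mult_le_0_iff)
  then show ?thesis unfolding c_def by simp
qed

lemma orthogonal_projection_exists: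
  assumes "csubspace M" and "closed_csubspace M"
  shows "\<exists>p\<in>M. \<forall>m\<in>M. cinner (u - p) m = 0"
  using nearest_point_exists[OF assms] nearest_point_orthogonal[OF assms(1)] by blast

lemma riesz_representation:
  fixes f :: "'a::chilbert \<Rightarrow> complex"
  assumes add: "\<And>a b. f (a + b) = f a + f b" and scale: "\<And>c a. f (c *\<^sub>C a) = c * f a"
    and bounded: "\<And>x. cmod (f x) \<le> K * hnorm x"
  shows "\<exists>w. \<forall>x. f x = cinner x w"
proof -
  have diff: "f (a - b) = f a - f b" for a b
    using add[of "a - b" b] by simp
  define N where "N = {x. f x = 0}"
  have "csubspace N"
    unfolding csubspace_def N_def using add scale diff[of 0 0] by simp
  moreover have "closed_csubspace N"
    unfolding N_def using diff bounded by (rule closed_csubspace_zero_set) simp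
  ultimately have proj: "\<exists>p\<in>N. \<forall>m\<in>N. cinner (x - p) m = 0" for x
    by (rule orthogonal_projection_exists)
  show ?thesis
  proof (cases "\<forall>x. f x = 0")
    case True
    then show ?thesis by (intro exI[of _ 0]) simp
  next
    case False
    then obtain x0 where x0: "f x0 \<noteq> 0" by blast
    obtain p where p: "p \<in> N" and orth: "\<forall>m\<in>N. cinner (x0 - p) m = 0"
      using proj[of x0] by blast
    define v where "v = x0 - p"
    have fv: "f v \<noteq> 0" unfolding v_def diff using p x0 unfolding N_def by simp
    then have vv: "cinner v v \<noteq> 0"
      using cinner_eq_zero[of v] diff[of 0 0] by auto
    have "f x = cinner x (cnj (f v / cinner v v) *\<^sub>C v)" for x
    proof -
      define a where "a = f x / f v"
      have "x - a *\<^sub>C v \<in> N" unfolding N_def using fv by (simp add: diff scale a_def)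
      then have "cnj (cinner v (x - a *\<^sub>C v)) = 0" using orth unfolding v_def by simp
      then have "cinner x v = a * cinner v v"
        using cin.hermitian[of x v] cin.hermitian[of v v]
        by (simp add: cin.diff_right cin.scale_right)
      then show ?thesis
        unfolding a_def cin.scale_right using vv fv by (simp add: field_simps)
    qed
    then show ?thesis by blast
  qed
qed

lemma cinner_adj:
  assumes T: "bop T"
  shows "cinner (T x) y = cinner x (adj T y)"
proof -
  obtain c where c: "\<forall>x. hnorm (T x) \<le> c * hnorm x" "0 < c" using bop_bound[OF T] by blast
  have "\<exists>w. \<forall>x. cinner (T x) y = cinner x w" for y
  proof (rule riesz_representation)
    show "cinner (T (a + b)) y = cinner (T a) y + cinner (T b) y" for a b
      by (simp add: bop_add[OF T] cin.add_left)
    show "cinner (T (k *\<^sub>C a)) y = k * cinner (T a) y" for k a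
      by (simp add: bop_scale[OF T] cinner_scaleC_left)
    show "cmod (cinner (T x) y) \<le> (c * hnorm y) * hnorm x" for x
      using cin.cauchy_schwarz[of "T x" y] c cin.snorm_nonneg[of y]
      by (metis mult.assoc mult.commute mult_left_mono order_trans)
  qed
  then obtain g where g: "\<And>y x. cinner (T x) y = cinner x (g y)" by metis
  have "adj T = g" unfolding adj_def
  proof (rule the_equality)
    fix T' assume T': "\<forall>x y. cinner (T x) y = cinner x (T' y)"
    show "T' = g"
    proof
      fix y
      have "cinner (T' y - g y) (T' y - g y) = 0"
        using T' g by (simp add: cin.diff_right)
      then show "T' y = g y" using cinner_eq_zero by fastforce
    qed
  qed (use g in blast)
  then show ?thesis using g by simp
qed

lemma bop_mp_inv:
  assumes A: "bop A"
  shows "A (mp_inv A (A w)) = A w"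
proof -
  define N where "N = {x. A x = 0}"
  have "csubspace N" unfolding csubspace_def N_def
    by (simp add: bop_zero[OF A] bop_add[OF A] bop_scale[OF A])
  moreover have "closed_csubspace N"
  proof -
    obtain c where c: "\<forall>x. hnorm (A x) \<le> c * hnorm x" using bop_bound[OF A] by blast
    show ?thesis unfolding N_def
    proof (rule closed_csubspace_zero_set)
      show "A (x - y) = A x - A y" for x y by (rule bop_diff[OF A])
      show "hnorm (A x) \<le> c * hnorm x" for x using c by blast
      show "v = 0" if "hnorm v \<le> 0" for v using that cin.snorm_nonneg[of v] by simp
    qed
  qed
  ultimately obtain p where p: "p \<in> N" and orth: "\<forall>m\<in>N. cinner (w - p) m = 0"
    using orthogonal_projection_exists by blast
  have "\<exists>!x. (\<forall>n. A n = 0 \<longrightarrow> cinner x n = 0) \<and> A x = A w"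
  proof (rule ex1I)
    show "(\<forall>n. A n = 0 \<longrightarrow> cinner (w - p) n = 0) \<and> A (w - p) = A w"
      using orth p unfolding N_def by (simp add: bop_diff[OF A])
  next
    fix x assume x: "(\<forall>n. A n = 0 \<longrightarrow> cinner x n = 0) \<and> A x = A w"
    then have "x - (w - p) \<in> N"
      using p unfolding N_def by (simp add: bop_diff[OF A])
    then have "cinner (x - (w - p)) (x - (w - p)) = 0"
      using x orth unfolding N_def by (simp add: cin.diff_left)
    then show "x = w - p" using cinner_eq_zero by fastforce
  qed
  then show ?thesis unfolding mp_inv_def by (rule theI'[THEN conjunct2])
qed

section \<open>Positive operators and \<open>A\<close>-bounded operators\<close>

definition A_bounded :: "('a::chilbert \<Rightarrow> 'a) \<Rightarrow> ('a \<Rightarrow> 'a) \<Rightarrow> bool" where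
  "A_bounded A T \<longleftrightarrow> (\<exists>C\<ge>0. \<forall>x. anorm A (T x) \<le> C * anorm A x)"

lemma Sup_insert_zero_upper:
  fixes g :: "'b \<Rightarrow> real"
  assumes "\<And>z. z \<in> U \<Longrightarrow> g z \<le> C" and "z \<in> U"
  shows "g z \<le> Sup (insert 0 (g ` U))"
proof -
  have "bdd_above (g ` U)" using assms(1) by (rule bdd_aboveI2)
  then show ?thesis using assms(2) by (intro cSup_upper) auto
qed

lemma Sup_insert_zero_nonneg:
  fixes g :: "'b \<Rightarrow> real"
  assumes "\<And>z. z \<in> U \<Longrightarrow> g z \<le> C"
  shows "0 \<le> Sup (insert 0 (g ` U))"
proof -
  have "bdd_above (g ` U)" using assms(1) by (rule bdd_aboveI2)
  then show ?thesis by (intro cSup_upper) auto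
qed

lemma A_dwrad_sq_le:
  assumes b: "0 \<le> b"
    and bound: "\<And>z. anorm A z = 1 \<Longrightarrow> (cmod (cinner (A (T z)) z))\<^sup>2 + (anorm A (T z)) ^ 4 \<le> b"
  shows "(A_dwrad A T)\<^sup>2 \<le> b"
proof -
  have le: "sqrt ((cmod (cinner (A (T z)) z))\<^sup>2 + (anorm A (T z)) ^ 4) \<le> sqrt b" if "anorm A z = 1" for z
    using bound[OF that] by simp
  then have "A_dwrad A T \<le> sqrt b"
    unfolding A_dwrad_def using b by (intro cSup_least) auto
  moreover have "0 \<le> A_dwrad A T"
    unfolding A_dwrad_def using le by (rule Sup_insert_zero_nonneg) simp
  ultimately have "(A_dwrad A T)\<^sup>2 \<le> (sqrt b)\<^sup>2" by (rule power_mono)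
  then show ?thesis using b by simp
qed

text \<open>By polarisation at \<open>x + y\<close> and \<open>x + \<i> y\<close>.\<close>

lemma positive_op_hermitian:
  assumes "positive_op A"
  shows "cinner (A y) x = cnj (cinner (A x) y)"
proof -
  have A: "bop A" and real: "\<And>z. Im (cinner (A z) z) = 0"
    using assms unfolding positive_op_def by auto
  have "Im (cinner (A x) y) + Im (cinner (A y) x) = 0"
    using real[of "x + y"] real[of x] real[of y] by (simp add: bop_add[OF A] cin.add_left cin.add_right)
  moreover have "Re (cinner (A y) x) - Re (cinner (A x) y) = 0"
    using real[of "x + \<i> *\<^sub>C y"] real[of x] real[of y]
    by (simp add: bop_add[OF A] bop_scale[OF A] cin.add_left cin.add_right cinner_scaleC_left cin.scale_right)
  ultimately show ?thesis by (simp add: complex_eq_iff)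
qed

locale positive_operator =
  fixes A :: "'a::chilbert \<Rightarrow> 'a"
  assumes positive: "positive_op A"
begin

lemma bop_A: "bop A"
  using positive unfolding positive_op_def by simp

sublocale A: semi_inner "\<lambda>x y. cinner (A x) y"
  rewrites "semi_inner.snorm (\<lambda>x y. cinner (A x) y) = anorm A"
proof -
  show "semi_inner (\<lambda>x y. cinner (A x) y)"
  proof
    fix x y z :: 'a and a
    show "cinner (A (x + y)) z = cinner (A x) z + cinner (A y) z"
      by (simp add: bop_add[OF bop_A] cin.add_left)
    show "cinner (A (a *\<^sub>C x)) z = a * cinner (A x) z"
      by (simp add: bop_scale[OF bop_A] cinner_scaleC_left)
    show "cinner (A y) x = cnj (cinner (A x) y)" by (rule positive_op_hermitian[OF positive])
    show "0 \<le> Re (cinner (A x) x)" using positive unfolding positive_op_def by simp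
  qed
  then show "semi_inner.snorm (\<lambda>x y. cinner (A x) y) = anorm A"
    using semi_inner.snorm_def unfolding anorm_def by fastforce
qed

lemma anorm_le_hnorm: "\<exists>K\<ge>0. \<forall>y. anorm A y \<le> K * hnorm y"
proof -
  obtain c where c: "\<forall>x. hnorm (A x) \<le> c * hnorm x" "0 < c" using bop_bound[OF bop_A] by blast
  have "anorm A y \<le> sqrt c * hnorm y" for y
  proof -
    have "(anorm A y)\<^sup>2 \<le> hnorm (A y) * hnorm y"
      using cin.Re_le_snorm_mult[of "A y" y] unfolding A.snorm_sq .
    also have "\<dots> \<le> c * hnorm y * hnorm y"
      using c cin.snorm_nonneg[of y] by (simp add: mult_right_mono)
    also have "\<dots> = (sqrt c * hnorm y)\<^sup>2"
      using c by (simp add: power_mult_distrib power2_eq_square)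
    finally show ?thesis
      by (rule power2_le_imp_le) (use c cin.snorm_nonneg[of y] in simp)
  qed
  then show ?thesis using c by (intro exI[of _ "sqrt c"]) simp
qed

lemma BA_adjoint:
  assumes S: "bop S" and R: "A \<circ> R = adj S \<circ> A"
  shows "cinner (A (R u)) v = cinner (A u) (S v)"
proof -
  have "cinner (A (R u)) v = cnj (cinner v (adj S (A u)))"
    using fun_cong[OF R, of u] cin.hermitian[of "A (R u)" v] by simp
  also have "cinner v (adj S (A u)) = cinner (S v) (A u)"
    by (rule cinner_adj[OF S, symmetric])
  finally show ?thesis using cin.hermitian[of "A u" "S v"] by simp
qed

lemma A_comp_sharpA:
  assumes "S \<in> BA A"
  shows "A \<circ> sharpA A S = adj S \<circ> A"
proof
  fix u
  obtain R where "A \<circ> R = adj S \<circ> A" using assms unfolding BA_def by blast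
  then have "adj S (A u) = A (R u)" by (simp add: fun_eq_iff)
  then show "(A \<circ> sharpA A S) u = (adj S \<circ> A) u"
    unfolding sharpA_def comp_apply by (simp only: bop_mp_inv[OF bop_A])
qed

lemma sharpA_adjoint:
  assumes "S \<in> BA A"
  shows "cinner (A (sharpA A S u)) v = cinner (A u) (S v)"
proof (rule BA_adjoint)
  show "bop S" using assms unfolding BA_def by blast
qed (rule A_comp_sharpA[OF assms])

lemma BA_A_bounded:
  assumes "S \<in> BA A"
  shows "A_bounded A S"
proof -
  obtain R where S: "bop S" and R: "bop R" "A \<circ> R = adj S \<circ> A"
    using assms unfolding BA_def by blast
  have adj: "cinner (A (R u)) v = cinner (A u) (S v)" for u v
    by (rule BA_adjoint[OF S R(2)])
  define T where "T x = R (S x)" for x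
  have selfadjoint: "cinner (A (T u)) v = cinner (A u) (T v)" for u v
    using A.adjoint_comp_swap[OF adj] A.hermitian unfolding T_def by metis
  obtain cR cS where cR: "\<forall>x. hnorm (R x) \<le> cR * hnorm x" "0 < cR"
    and cS: "\<forall>x. hnorm (S x) \<le> cS * hnorm x" "0 < cS"
    using bop_bound[OF R(1)] bop_bound[OF S] by blast
  define c where "c = cR * cS"
  have c: "0 < c" unfolding c_def using cR cS by simp
  have "hnorm (T x) \<le> c * hnorm x" for x
    using cR cS unfolding T_def c_def by (metis mult.assoc mult_left_mono less_imp_le order_trans)
  then have T_pow: "hnorm ((T ^^ k) x) \<le> c ^ k * hnorm x" for k x
    using c by (intro hnorm_funpow_le) auto
  obtain K where K: "0 \<le> K" "\<forall>y. anorm A y \<le> K * hnorm y" using anorm_le_hnorm by blast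
  have T_bound: "anorm A (T x) \<le> c * anorm A x" for x
  proof (rule A.snorm_le_of_selfadjoint_powers[OF selfadjoint _ c])
    show "anorm A ((T ^^ k) x) \<le> K * hnorm x * c ^ k" for k
      using K T_pow[of k x] by (metis mult.assoc mult.commute mult_left_mono order_trans)
  qed
  have "anorm A (S x) \<le> sqrt c * anorm A x" for x
  proof -
    have "(anorm A (S x))\<^sup>2 \<le> c * (anorm A x)\<^sup>2"
      using A.snorm_sq_le_adjoint[OF adj, of x] T_bound[of x] A.snorm_nonneg[of x]
      unfolding T_def by (metis mult_right_mono order_trans power2_eq_square mult.assoc)
    also have "\<dots> = (sqrt c * anorm A x)\<^sup>2"
      using c by (simp add: power_mult_distrib)
    finally show ?thesis
      by (rule power2_le_imp_le) (use c A.snorm_nonneg[of x] in simp)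
  qed
  then show ?thesis unfolding A_bounded_def using c by (intro exI[of _ "sqrt c"]) simp
qed

lemma sharpA_A_bounded:
  assumes "S \<in> BA A"
  shows "A_bounded A (sharpA A S)"
proof -
  obtain C where "0 \<le> C" "\<forall>x. anorm A (S x) \<le> C * anorm A x"
    using BA_A_bounded[OF assms] unfolding A_bounded_def by blast
  then show ?thesis
    unfolding A_bounded_def using A.snorm_adjoint_le[OF sharpA_adjoint[OF assms]] by blast
qed

lemma A_bounded_comp:
  assumes "A_bounded A T" and "A_bounded A U"
  shows "A_bounded A (\<lambda>x. T (U x))"
proof -
  obtain C D where C: "0 \<le> C" "\<forall>x. anorm A (T x) \<le> C * anorm A x"
    and D: "0 \<le> D" "\<forall>x. anorm A (U x) \<le> D * anorm A x"
    using assms unfolding A_bounded_def by blast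
  have "anorm A (T (U x)) \<le> (C * D) * anorm A x" for x
  proof -
    have "anorm A (T (U x)) \<le> C * anorm A (U x)" using C by blast
    also have "\<dots> \<le> C * (D * anorm A x)" using C D by (intro mult_left_mono) auto
    finally show ?thesis by (simp add: mult.assoc)
  qed
  then show ?thesis unfolding A_bounded_def using C D by (intro exI[of _ "C * D"]) simp
qed

lemma A_bounded_add:
  assumes "A_bounded A T" and "A_bounded A U"
  shows "A_bounded A (\<lambda>x. T x + U x)"
proof -
  obtain C D where C: "0 \<le> C" "\<forall>x. anorm A (T x) \<le> C * anorm A x"
    and D: "0 \<le> D" "\<forall>x. anorm A (U x) \<le> D * anorm A x"
    using assms unfolding A_bounded_def by blast
  have "anorm A (T x + U x) \<le> (C + D) * anorm A x" for x
  proof -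
    have "anorm A (T x + U x) \<le> anorm A (T x) + anorm A (U x)" by (rule A.snorm_triangle)
    also have "\<dots> \<le> C * anorm A x + D * anorm A x" using C D by (intro add_mono) auto
    finally show ?thesis by (simp add: distrib_right)
  qed
  then show ?thesis unfolding A_bounded_def using C D by (intro exI[of _ "C + D"]) simp
qed

lemma A_bounded_unit_bound:
  assumes "A_bounded A T"
  obtains C where "\<And>z. anorm A z = 1 \<Longrightarrow> anorm A (T z) \<le> C"
proof -
  obtain C where "\<forall>x. anorm A (T x) \<le> C * anorm A x"
    using assms unfolding A_bounded_def by blast
  then show thesis by (intro that[of C]) (metis mult.right_neutral)
qed

lemma A_opnorm_ge:
  assumes "A_bounded A T" and "anorm A z = 1"
  shows "anorm A (T z) \<le> A_opnorm A T"
proof -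
  obtain C where "\<And>z. anorm A z = 1 \<Longrightarrow> anorm A (T z) \<le> C"
    using A_bounded_unit_bound[OF assms(1)] by blast
  then show ?thesis
    unfolding A_opnorm_def using assms(2) by (intro Sup_insert_zero_upper[of _ _ C]) auto
qed

lemma A_opnorm_nonneg:
  assumes "A_bounded A T"
  shows "0 \<le> A_opnorm A T"
proof -
  obtain C where "\<And>z. anorm A z = 1 \<Longrightarrow> anorm A (T z) \<le> C"
    using A_bounded_unit_bound[OF assms] by blast
  then show ?thesis
    unfolding A_opnorm_def by (intro Sup_insert_zero_nonneg[of _ _ C]) auto
qed

lemma cmod_le_anorm_unit:
  assumes "anorm A z = 1"
  shows "cmod (cinner (A (T z)) z) \<le> anorm A (T z)"
  using A.cauchy_schwarz[of "T z" z] assms by simp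

lemma A_numrad_ge:
  assumes "A_bounded A T" and "anorm A z = 1"
  shows "cmod (cinner (A (T z)) z) \<le> A_numrad A T"
proof -
  obtain C where "\<And>z. anorm A z = 1 \<Longrightarrow> anorm A (T z) \<le> C"
    using A_bounded_unit_bound[OF assms(1)] by blast
  then have "\<And>z. anorm A z = 1 \<Longrightarrow> cmod (cinner (A (T z)) z) \<le> C"
    using cmod_le_anorm_unit order_trans by blast
  then show ?thesis
    unfolding A_numrad_def using assms(2) by (intro Sup_insert_zero_upper[of _ _ C]) auto
qed

lemma A_numrad_nonneg:
  assumes "A_bounded A T"
  shows "0 \<le> A_numrad A T"
proof -
  obtain C where "\<And>z. anorm A z = 1 \<Longrightarrow> anorm A (T z) \<le> C"
    using A_bounded_unit_bound[OF assms(1)] by blast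
  then have "\<And>z. anorm A z = 1 \<Longrightarrow> cmod (cinner (A (T z)) z) \<le> C"
    using cmod_le_anorm_unit order_trans by blast
  then show ?thesis
    unfolding A_numrad_def by (intro Sup_insert_zero_nonneg[of _ _ C]) auto
qed

lemma A_bounded_BA_terms:
  assumes "S \<in> BA A"
  shows "A_bounded A (\<lambda>z. sharpA A S (S z) + S z)"
    and "A_bounded A (\<lambda>z. sharpA A S (S (S z)))"
    and "A_bounded A (\<lambda>z. sharpA A S (S (sharpA A S (S z))) + sharpA A S (S z))"
proof -
  have S: "A_bounded A S" and Sh: "A_bounded A (sharpA A S)"
    using BA_A_bounded sharpA_A_bounded assms by blast+
  show "A_bounded A (\<lambda>z. sharpA A S (S z) + S z)"
    using A_bounded_add[OF A_bounded_comp[OF Sh S] S] .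
  show "A_bounded A (\<lambda>z. sharpA A S (S (S z)))"
    using A_bounded_comp[OF Sh A_bounded_comp[OF S S]] .
  show "A_bounded A (\<lambda>z. sharpA A S (S (sharpA A S (S z))) + sharpA A S (S z))"
    using A_bounded_add[OF A_bounded_comp[OF Sh A_bounded_comp[OF S A_bounded_comp[OF Sh S]]]
        A_bounded_comp[OF Sh S]] .
qed

lemma davis_wielandt_unit_le:
  assumes S: "S \<in> BA A" and \<alpha>: "\<alpha> \<noteq> 0" and z: "anorm A z = 1"
  shows "(cmod (cinner (A (S z)) z))\<^sup>2 + (anorm A (S z)) ^ 4
    \<le> (A_numrad A (\<lambda>z. sharpA A S (S z) + S z))\<^sup>2
       + 2 / cmod \<alpha> * A_numrad A (\<lambda>z. sharpA A S (S (S z)))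
       + max 1 (cmod (\<alpha> - 1)) / cmod \<alpha>
         * A_opnorm A (\<lambda>z. sharpA A S (S (sharpA A S (S z))) + sharpA A S (S z))"
proof -
  let ?Sh = "sharpA A S"
  note bounded = A_bounded_BA_terms[OF S]
  have "(cmod (cinner (A (?Sh (S z) + S z)) z))\<^sup>2 \<le> (A_numrad A (\<lambda>z. ?Sh (S z) + S z))\<^sup>2"
    using A_numrad_ge[OF bounded(1) z] by (intro power_mono) auto
  moreover have "2 / cmod \<alpha> * cmod (cinner (A (?Sh (S (S z)))) z)
      \<le> 2 / cmod \<alpha> * A_numrad A (\<lambda>z. ?Sh (S (S z)))"
    using A_numrad_ge[OF bounded(2) z] by (rule mult_left_mono) simp
  moreover have "max 1 (cmod (\<alpha> - 1)) / cmod \<alpha> * anorm A (?Sh (S (?Sh (S z))) + ?Sh (S z))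
      \<le> max 1 (cmod (\<alpha> - 1)) / cmod \<alpha> * A_opnorm A (\<lambda>z. ?Sh (S (?Sh (S z))) + ?Sh (S z))"
    using A_opnorm_ge[OF bounded(3) z] by (rule mult_left_mono) simp
  ultimately show ?thesis
    using A.davis_wielandt_unit_bound[OF sharpA_adjoint[OF S] z \<alpha>] by linarith
qed

end

theorem theorem2p2:
  fixes A S :: "'a::chilbert \<Rightarrow> 'a" and \<alpha> :: complex
  assumes "positive_op A" and "S \<in> BA A" and "\<alpha> \<noteq> 0"
  shows "(A_dwrad A S)\<^sup>2
    \<le> (A_numrad A (\<lambda>z. sharpA A S (S z) + S z))\<^sup>2
       + 2 / cmod \<alpha> * A_numrad A (\<lambda>z. sharpA A S (S (S z)))
       + max 1 (cmod (\<alpha> - 1)) / cmod \<alpha>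
         * A_opnorm A (\<lambda>z. sharpA A S (S (sharpA A S (S z))) + sharpA A S (S z))"
proof -
  interpret positive_operator A by (rule positive_operator.intro) (fact assms(1))
  note bounded = A_bounded_BA_terms[OF assms(2)]
  show ?thesis
  proof (rule A_dwrad_sq_le, goal_cases nonneg unit)
    case nonneg
    show ?case using A_numrad_nonneg[OF bounded(2)] A_opnorm_nonneg[OF bounded(3)] by simp
  next
    case (unit z)
    show ?case by (rule davis_wielandt_unit_le[OF assms(2,3) unit])
  qed
qed

end
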